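(* Consider the M/G/1 queue with Poisson arrivals of rate $\lambda$ and service time distribution $G_\epsilon=(1-\epsilon)F_p+\epsilon F_h$, $\epsilon\in[0,1)$, where $F_p$ is a phase-type distribution with mean $\mu_p$ and $F_h$ is a heavy-tailed distribution with finite mean $\mu_h$, and assume $\lambda\mu_p<1$. Let $V_\epsilon$ be the stationary workload, $V=V_0$, $\tilde v_\epsilon(s)=E[e^{-sV_\epsilon}]$, and let $c$ be the function on $[0,\infty)$ with $\int_0^\infty e^{-st}c(t)\,dt=-\frac1s\,\partial_\epsilon\tilde v_\epsilon(s)|_{\epsilon=0}$ (the first-order correction term of $t\mapsto\Pr(V_\epsilon>t)$). Let $V'$ be a copy of $V$ and $B_p^e,B_h^e$ random variables with the stationary excess distributions of $F_p$ and $F_h$, all mutually independent. Then the corrected phase-type approximation $\Pr(V>t)+\epsilon c(t)$ takes the form \[ \Pr(V>t)+\epsilon\,\frac{\lambda}{1-\lambda\mu_p}\Big((\mu_p-\mu_h)\Pr(V>t)+\mu_h\Pr(V+V'+B_h^e>t)-\mu_p\Pr(V+V'+B_p^e>t)\Big), \] i.e. $c(t)=\frac{\lambda}{1-\lambda\mu_p}\big((\mu_p-\mu_h)\Pr(V>t)+\mu_h\Pr(V+V'+B_h^e>t)-\mu_p\Pr(V+V'+B_p^e>t)\big)$ for $t\ge0$.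
   Context: The stationary excess distribution of a distribution $F$ on $[0,\infty)$ with finite mean $\mu_F$ is the distribution with density $(1-F(x))/\mu_F$, $x\ge 0$. The paper denotes $c$ by $\mathcal L^{-1}\{\tilde v(s)k(s)\}$, where $k$ is defined by $\tilde v_\epsilon(s)=\tilde v_0(s)+\epsilon\tilde v_0(s)k(s)+O(\epsilon^2)$. *)

theory Defs
  imports "HOL-Probability.Probability"
begin

definition nonneg_distr :: "real measure \<Rightarrow> bool" where
  "nonneg_distr F \<longleftrightarrow> prob_space F \<and> sets F = sets borel \<and> (AE x in F. 0 \<le> x)"

definition mean :: "real measure \<Rightarrow> real" where
  "mean F = (\<integral>x. x \<partial>F)"

definition mmult :: "nat \<Rightarrow> (nat \<Rightarrow> nat \<Rightarrow> real) \<Rightarrow> (nat \<Rightarrow> nat \<Rightarrow> real) \<Rightarrow> nat \<Rightarrow> nat \<Rightarrow> real" where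
  "mmult m A B = (\<lambda>i j. \<Sum>k<m. A i k * B k j)"

fun mpow :: "nat \<Rightarrow> (nat \<Rightarrow> nat \<Rightarrow> real) \<Rightarrow> nat \<Rightarrow> nat \<Rightarrow> nat \<Rightarrow> real" where
  "mpow m T 0 = (\<lambda>i j. if i = j then 1 else 0)"
| "mpow m T (Suc k) = mmult m (mpow m T k) T"

definition mexp :: "nat \<Rightarrow> (nat \<Rightarrow> nat \<Rightarrow> real) \<Rightarrow> real \<Rightarrow> nat \<Rightarrow> nat \<Rightarrow> real" where
  "mexp m T x = (\<lambda>i j. \<Sum>k. x ^ k / fact k * mpow m T k i j)"

text \<open>Phase-type distribution PH(alpha, T) of order m: absorption time of a finite
  continuous-time Markov chain with initial distribution alpha on the m transient states and
  nonsingular sub-generator T; its distribution function is 1 - alpha exp(T x) 1.\<close>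
definition phase_type :: "real measure \<Rightarrow> bool" where
  "phase_type F \<longleftrightarrow> nonneg_distr F \<and>
     (\<exists>(m::nat) (\<alpha>::nat \<Rightarrow> real) (T::nat \<Rightarrow> nat \<Rightarrow> real).
        m \<ge> 1 \<and>
        (\<forall>i<m. 0 \<le> \<alpha> i) \<and> (\<Sum>i<m. \<alpha> i) = 1 \<and>
        (\<forall>i<m. \<forall>j<m. i \<noteq> j \<longrightarrow> 0 \<le> T i j) \<and>
        (\<forall>i<m. (\<Sum>j<m. T i j) \<le> 0) \<and>
        (\<forall>v::nat \<Rightarrow> real. (\<forall>i<m. (\<Sum>j<m. T i j * v j) = 0) \<longrightarrow> (\<forall>j<m. v j = 0)) \<and>
        (\<forall>x\<ge>0. measure F {..x} = 1 - (\<Sum>i<m. \<Sum>j<m. \<alpha> i * mexp m T x i j)))"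

definition heavy_tailed :: "real measure \<Rightarrow> bool" where
  "heavy_tailed F \<longleftrightarrow> (\<forall>\<delta>>0. (\<integral>\<^sup>+ x. ennreal (exp (\<delta> * x)) \<partial>F) = \<infinity>)"

definition mix :: "real \<Rightarrow> real measure \<Rightarrow> real measure \<Rightarrow> real measure" where
  "mix \<epsilon> M N = measure_of (space M) (sets M)
      (\<lambda>A. ennreal (1 - \<epsilon>) * emeasure M A + ennreal \<epsilon> * emeasure N A)"

definition excess :: "real measure \<Rightarrow> real measure" where
  "excess F = density lborel
      (\<lambda>x. ennreal (indicator {0..} x * (1 - measure F {..x}) / mean F))"

text \<open>Law V of the stationary workload of the stable M/G/1 queue with arrival rate lam and
  service time distribution G, characterised by the Pollaczek-Khinchine transform.\<close>
definition mg1_workload :: "real \<Rightarrow> real measure \<Rightarrow> real measure \<Rightarrow> bool" where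
  "mg1_workload lam G V \<longleftrightarrow> nonneg_distr V \<and>
     (\<forall>s>0. (\<integral>x. exp (- s * x) \<partial>V) =
        (1 - lam * mean G) * s / (s - lam * (1 - (\<integral>x. exp (- s * x) \<partial>G))))"

end

theory Submission
  imports Defs
begin

text \<open>The correction \<open>c\<close> is identified through its Laplace transform. Differentiating the
  Pollaczek-Khinchine formula for the workload transform \<open>v\<^sub>\<epsilon>(s)\<close> of the mixed service law at
  \<open>\<epsilon> = 0\<close> gives \<open>-(1/s) \<partial>\<^sub>\<epsilon>v\<^sub>\<epsilon>(s) = \<lambda>/(1 - \<lambda>\<mu>\<^sub>p) \<cdot> v(s)/s \<cdot> (\<mu>\<^sub>h - \<mu>\<^sub>p + v(s) (b\<^sub>h(s) - b\<^sub>p(s))/s)\<close>,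
  where \<open>b\<close> denotes the transforms of the service laws. On the other side, the survival function
  of a law with transform \<open>g\<close> has Laplace transform \<open>(1 - g(s))/s\<close>, and the stationary excess
  distribution of \<open>F\<close> has transform \<open>(1 - b(s))/(s \<mu>)\<close>; so the claimed combination of survival
  functions has the same transform as \<open>c\<close>. Both functions are right-continuous, and a
  right-continuous function all of whose Laplace transforms vanish is zero (Lerch's theorem, via
  integration by parts and Weierstrass approximation in the variable \<open>exp (- u)\<close>).\<close>

lemma right_derivative_zero_bound:
  fixes f :: "real \<Rightarrow> real"
  assumes ab: "a \<le> b" and cont: "continuous_on {a..b} f"
    and der: "\<And>x. x \<in> {a..<b} \<Longrightarrow> (f has_real_derivative 0) (at x within {x..b})"
    and e: "e > 0"
  shows "\<bar>f b - f a\<bar> \<le> e * (b - a)"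
proof (rule ccontr)
  assume fails: "\<not> ?thesis"
  define A where "A = {x\<in>{a..b}. e * (x - a) < \<bar>f x - f a\<bar>}"
  have bA: "b \<in> A" using fails ab unfolding A_def by auto
  have bdd: "bdd_below A" unfolding A_def by (rule bdd_belowI[of _ a]) auto
  define m where "m = Inf A"
  have m_le: "m \<le> z" if "z \<in> A" for z using cInf_lower[OF that bdd] m_def by simp
  have am: "a \<le> m" unfolding m_def using bA by (intro cInf_greatest) (auto simp: A_def)
  have mb: "m \<le> b" using m_le[OF bA] .
  \<comment> \<open>The first point where the bound fails cannot be attained (by continuity) nor be a limit of
      failures from the right (by the vanishing right derivative).\<close>
  show False
  proof (cases "m \<in> A")
    case True
    then have g: "\<bar>f m - f a\<bar> - e * (m - a) > 0" unfolding A_def by auto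
    then have ma: "m > a" using am by (cases "m = a") auto
    have "continuous (at m within {a..b}) (\<lambda>y. \<bar>f y - f a\<bar> - e * (y - a))"
      using cont am mb by (intro continuous_intros) (simp_all add: continuous_on_eq_continuous_within)
    then obtain d where d: "d > 0" and dd: "\<And>y. y \<in> {a..b} \<Longrightarrow> dist y m < d \<Longrightarrow>
        dist (\<bar>f y - f a\<bar> - e * (y - a)) (\<bar>f m - f a\<bar> - e * (m - a)) < \<bar>f m - f a\<bar> - e * (m - a)"
      using g unfolding continuous_within_eps_delta by blast
    define y where "y = max a (m - d/2)"
    have y: "y \<in> {a..b}" "dist y m < d" "y < m" using d am mb ma unfolding y_def dist_real_def by auto
    have "\<bar>f y - f a\<bar> - e * (y - a) > 0" using dd[OF y(1,2)] unfolding dist_real_def by linarith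
    then have "y \<in> A" using y unfolding A_def by auto
    then show False using m_le y by force
  next
    case False
    have mA: "\<bar>f m - f a\<bar> \<le> e * (m - a)" using False am mb unfolding A_def by auto
    have mltb: "m < b" using False bA m_le[OF bA] by (cases "m = b") auto
    have "(f has_real_derivative 0) (at m within {m..b})" using der am mltb by auto
    then have "((\<lambda>y. (f y - f m) / (y - m)) \<longlongrightarrow> 0) (at m within {m..b})"
      by (simp add: has_field_derivative_iff)
    then have "eventually (\<lambda>y. dist ((f y - f m) / (y - m)) 0 < e) (at m within {m..b})"
      using e tendstoD by blast
    then obtain d where d: "d > 0" and dd: "\<And>y. y \<in> {m..b} \<Longrightarrow> y \<noteq> m \<Longrightarrow> dist y m < d \<Longrightarrow>
        dist ((f y - f m) / (y - m)) 0 < e"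
      unfolding eventually_at by blast
    define m' where "m' = min b (m + d/2)"
    have "m' \<le> z" if z: "z \<in> A" for z
    proof (rule ccontr)
      assume "\<not> m' \<le> z"
      have mz: "m \<le> z" using m_le z .
      have zm: "z \<noteq> m" using z False by auto
      have "z \<in> {m..b}" "dist z m < d" using mz \<open>\<not> m' \<le> z\<close> d unfolding m'_def dist_real_def by auto
      then have "\<bar>(f z - f m) / (z - m)\<bar> < e" using dd zm by simp
      then have "\<bar>f z - f m\<bar> < e * (z - m)" using mz zm by (simp add: abs_divide divide_less_eq)
      then have "\<bar>f z - f a\<bar> \<le> e * (z - a)" using mA by (simp add: algebra_simps abs_le_iff abs_less_iff)
      then show False using z unfolding A_def by auto
    qed
    then have "m' \<le> m" unfolding m_def using bA by (intro cInf_greatest) auto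
    then show False using mltb d unfolding m'_def by auto
  qed
qed

lemma right_derivative_zero_imp_eq:
  fixes f :: "real \<Rightarrow> real"
  assumes ab: "a \<le> b" and cont: "continuous_on {a..b} f"
    and der: "\<And>x. x \<in> {a..<b} \<Longrightarrow> (f has_real_derivative 0) (at x within {x..b})"
  shows "f b = f a"
proof -
  have "\<bar>f b - f a\<bar> \<le> e" if "e > 0" for e
  proof (cases "a = b")
    case False
    then have "\<bar>f b - f a\<bar> \<le> (e / (b - a)) * (b - a)"
      using right_derivative_zero_bound[OF ab cont der, of "e / (b - a)"] that ab by auto
    then show ?thesis using False ab by simp
  qed (use that in simp)
  then show ?thesis by (meson dense not_le abs_le_zero_iff eq_iff_diff_eq_0)
qed

lemma has_integral_atLeast_imp_tendsto:
  fixes f :: "real \<Rightarrow> real"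
  assumes "(f has_integral y) {a..}"
  shows "((\<lambda>T. integral {a..T} f) \<longlongrightarrow> y) at_top"
proof (rule tendstoI)
  fix e :: real assume e: "e > 0"
  have "\<nexists>c d. {a..} = cbox c (d::real)"
  proof
    assume "\<exists>c d. {a..} = cbox c (d::real)"
    then obtain c d where "{a..} = cbox c (d::real)" by blast
    then have "max a d + 1 \<in> cbox c d" by auto
    then show False by auto
  qed
  then obtain B where B: "B > 0" and BB: "\<forall>c d. ball 0 B \<subseteq> cbox c d \<longrightarrow>
      (\<exists>z. ((\<lambda>x. if x \<in> {a..} then f x else 0) has_integral z) (cbox c d) \<and> norm (z - y) < e)"
    using has_integral_altD[OF assms _ e] by blast
  show "eventually (\<lambda>T. dist (integral {a..T} f) y < e) at_top"
    unfolding eventually_at_top_linorder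
  proof (intro exI allI impI)
    fix T assume T: "T \<ge> B"
    define c where "c = - B - \<bar>a\<bar>"
    have "ball 0 B \<subseteq> cbox c T" using T unfolding c_def by (auto simp: dist_real_def)
    then obtain z where z: "((\<lambda>x. if x \<in> {a..} then f x else 0) has_integral z) (cbox c T)"
       "norm (z - y) < e" using BB by blast
    have "(f has_integral z) ({a..} \<inter> cbox c T)" using z(1) has_integral_restrict_Int by blast
    moreover have "{a..} \<inter> cbox c T = {a..T}" using B unfolding c_def by auto
    ultimately have "integral {a..T} f = z" by (metis integral_unique)
    then show "dist (integral {a..T} f) y < e" using z(2) by (simp add: dist_norm)
  qed
qed

lemma integral_has_real_derivative_at_right:
  fixes f :: "real \<Rightarrow> real"
  assumes int: "f integrable_on {a..b}" and x: "a \<le> x" "x \<le> b"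
    and c: "continuous (at x within {x..b}) f"
  shows "((\<lambda>y. integral {a..y} f) has_real_derivative f x) (at x within {x..b})"
proof -
  have "f integrable_on {x..b}" using int x by (intro integrable_on_subinterval[OF int]) auto
  then have "((\<lambda>y. integral {x..y} f) has_vector_derivative f x) (at x within {x..b} - {})"
    using integral_has_vector_derivative_continuous_at[of f x b x "{}"] c x by auto
  then have "((\<lambda>y. integral {x..y} f) has_real_derivative f x) (at x within {x..b})"
    by (simp add: has_real_derivative_iff_has_vector_derivative)
  then have "((\<lambda>y. integral {a..x} f + integral {x..y} f) has_real_derivative f x) (at x within {x..b})"
    using DERIV_add[OF DERIV_const] by simp
  then show ?thesis
  proof (rule has_field_derivative_transform_within[OF _ zero_less_one])
    fix y assume y: "y \<in> {x..b}"
    then have "f integrable_on {a..y}" using x by (intro integrable_on_subinterval[OF int]) auto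
    then show "integral {a..x} f + integral {x..y} f = integral {a..y} f"
      using Henstock_Kurzweil_Integration.integral_combine[of a x y f] x y by auto
  qed (use x in auto)
qed

lemma laplace_integration_by_parts:
  fixes h :: "real \<Rightarrow> real"
  assumes int: "\<And>s. s > 0 \<Longrightarrow> (\<lambda>t. exp (- s * t) * h t) integrable_on {0..}"
    and rcont: "\<And>t. t \<ge> 0 \<Longrightarrow> continuous (at_right t) h"
    and s: "s > 0" and T: "T \<ge> 0"
  shows "integral {0..T} (\<lambda>u. exp (- (s + 1) * u) * h u) =
         exp (- s * T) * integral {0..T} (\<lambda>u. exp (- u) * h u)
         + s * integral {0..T} (\<lambda>u. exp (- s * u) * integral {0..u} (\<lambda>v. exp (- v) * h v))"
proof -
  define k where "k = (\<lambda>u. exp (- u) * h u)"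
  define g where "g = (\<lambda>u. exp (- (s + 1) * u) * h u)"
  define \<phi> where "\<phi> = (\<lambda>y. integral {0..y} k)"
  define q where "q = (\<lambda>u. exp (- s * u) * \<phi> u)"
  have k_int: "k integrable_on {0..b}" for b
    using int[of 1] by (intro integrable_on_subinterval[of _ "{0..}"]) (auto simp: k_def)
  have g_int: "g integrable_on {0..b}" for b
    using int[of "s+1"] s by (intro integrable_on_subinterval[of _ "{0..}"]) (auto simp: g_def)
  have h_cont: "continuous (at x within {x..b}) h" if "x \<ge> 0" for x b
  proof -
    have "continuous (at x within {x..}) h" using rcont[OF that] by (simp add: at_within_Ici_at_right)
    then show ?thesis by (rule continuous_within_subset) auto
  qed
  have \<phi>_cont: "continuous_on {0..b} \<phi>" for b
    unfolding \<phi>_def by (rule indefinite_integral_continuous_1[OF k_int])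
  have q_cont: "continuous_on {0..b} q" for b
    unfolding q_def by (intro continuous_intros \<phi>_cont)
  have q_int: "q integrable_on {0..b}" for b
    by (rule integrable_continuous_interval[OF q_cont])
  \<comment> \<open>The difference of both sides, as a function of T, has vanishing right derivative.\<close>
  define \<Psi> where "\<Psi> = (\<lambda>y. integral {0..y} g - exp (- s * y) * \<phi> y - s * integral {0..y} q)"
  have "\<Psi> T = \<Psi> 0"
  proof (rule right_derivative_zero_imp_eq[OF T])
    show "continuous_on {0..T} \<Psi>" unfolding \<Psi>_def
      by (intro continuous_intros \<phi>_cont indefinite_integral_continuous_1 g_int q_int)
    fix x assume x: "x \<in> {0..<T}"
    have q_cont_right: "continuous (at x within {x..T}) q"
      using x q_cont[of T] continuous_within_subset[of x "{0..T}" q "{x..T}"]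
      by (simp add: continuous_on_eq_continuous_within)
    have "((\<lambda>y. integral {0..y} g) has_real_derivative g x) (at x within {x..T})"
      using x by (intro integral_has_real_derivative_at_right g_int) (auto simp: g_def intro!: continuous_intros h_cont)
    moreover have "(\<phi> has_real_derivative k x) (at x within {x..T})"
      unfolding \<phi>_def using x
      by (intro integral_has_real_derivative_at_right k_int) (auto simp: k_def intro!: continuous_intros h_cont)
    moreover have "((\<lambda>y. integral {0..y} q) has_real_derivative q x) (at x within {x..T})"
      using x q_cont_right by (intro integral_has_real_derivative_at_right q_int) auto
    ultimately have "(\<Psi> has_real_derivative (g x - (- s * exp (- s * x) * \<phi> x + k x * exp (- s * x)) - s * q x))
       (at x within {x..T})"
      unfolding \<Psi>_def by (auto intro!: derivative_eq_intros)
    moreover have "g x - (- s * exp (- s * x) * \<phi> x + k x * exp (- s * x)) - s * q x = 0"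
      unfolding g_def k_def q_def by (simp add: algebra_simps flip: exp_add)
    ultimately show "(\<Psi> has_real_derivative 0) (at x within {x..T})" by simp
  qed
  then show ?thesis unfolding \<Psi>_def q_def \<phi>_def g_def k_def by simp
qed

lemma continuous_on_atLeast_if_atLeastAtMost:
  fixes f :: "real \<Rightarrow> 'a :: topological_space"
  assumes "\<And>b. continuous_on {a..b} f"
  shows "continuous_on {a..} f"
  unfolding continuous_on_eq_continuous_within
proof
  fix x :: real assume x: "x \<in> {a..}"
  have "continuous (at x within {a..x+1}) f"
    using assms[of "x+1"] x by (simp add: continuous_on_eq_continuous_within)
  moreover have "at x within {a..x+1} = at x within {a..}"
    by (rule at_within_nhd[of x "{..<x+1}"]) auto
  ultimately show "continuous (at x within {a..}) f" by simp
qed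

lemma continuous_on_atLeast_tendsto_bounded:
  fixes f :: "real \<Rightarrow> real"
  assumes cont: "continuous_on {a..} f" and lim: "(f \<longlongrightarrow> l) at_top"
  obtains M where "M > 0" "\<And>u. u \<ge> a \<Longrightarrow> \<bar>f u\<bar> \<le> M"
proof -
  obtain B where B: "\<And>u. u \<ge> B \<Longrightarrow> \<bar>f u - l\<bar> < 1"
    using tendstoD[OF lim zero_less_one] unfolding eventually_at_top_linorder dist_real_def by auto
  have "compact (f ` {a..max a B})"
    by (rule compact_continuous_image[OF continuous_on_subset[OF cont]]) auto
  then obtain M1 where M1: "\<And>y. y \<in> f ` {a..max a B} \<Longrightarrow> \<bar>y\<bar> \<le> M1"
    using compact_imp_bounded bounded_iff real_norm_def by metis
  show ?thesis
  proof (rule that[of "max 1 M1 + \<bar>l\<bar> + 1"])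
    fix u :: real assume "u \<ge> a"
    then show "\<bar>f u\<bar> \<le> max 1 M1 + \<bar>l\<bar> + 1"
      using M1[of "f u"] B[of u] abs_triangle_ineq2[of "f u" l] by (cases "u \<le> max a B") force+
  qed simp
qed

text \<open>Substituting \<open>x = exp (- u)\<close> turns a bounded continuous function on \<open>[0, \<infinity>)\<close>
  into a continuous function on \<open>[0, 1]\<close>, to which Weierstrass approximation applies.\<close>
lemma continuous_on_exp_substitution:
  fixes \<phi> :: "real \<Rightarrow> real"
  assumes cont: "continuous_on {0..} \<phi>" and bound: "\<And>u. u \<ge> 0 \<Longrightarrow> \<bar>\<phi> u\<bar> \<le> M"
  shows "continuous_on {0..1} (\<lambda>x. if x = 0 then 0 else x * \<phi> (- ln x))"
  unfolding continuous_on_eq_continuous_within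
proof
  define G where "G = (\<lambda>x::real. if x = 0 then 0 else x * \<phi> (- ln x))"
  fix x :: real assume x: "x \<in> {0..1}"
  show "continuous (at x within {0..1}) G"
  proof (cases "x = 0")
    case True
    have "(G \<longlongrightarrow> 0) (at 0 within {0..1})"
    proof (rule Lim_null_comparison)
      show "eventually (\<lambda>y. norm (G y) \<le> \<bar>M\<bar> * \<bar>y\<bar>) (at 0 within {0..1})"
        unfolding eventually_at_filter
      proof (intro always_eventually allI impI)
        fix y :: real assume y: "y \<noteq> 0" "y \<in> {0..1}"
        then have "\<bar>\<phi> (- ln y)\<bar> \<le> \<bar>M\<bar>" using bound[of "- ln y"] by auto
        then show "norm (G y) \<le> \<bar>M\<bar> * \<bar>y\<bar>" using y unfolding G_def
          by (auto simp: abs_mult mult.commute intro: mult_right_mono)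
      qed
    qed (auto intro!: tendsto_eq_intros)
    then show ?thesis using True unfolding continuous_within by (simp add: G_def)
  next
    case False
    then have "x > 0" using x by auto
    have "continuous_on {0<..1} (\<lambda>x. x * \<phi> (- ln x))"
      by (intro continuous_intros continuous_on_compose2[OF cont]) auto
    then have "continuous_on {0<..1} G"
      by (rule continuous_on_eq) (auto simp: G_def)
    then have "continuous (at x within {0<..1}) G"
      using x \<open>x > 0\<close> by (simp add: continuous_on_eq_continuous_within)
    moreover have "at x within {0<..1} = at x within {0..1}"
      by (rule at_within_nhd[of x "{0<..}"]) (use \<open>x > 0\<close> in auto)
    ultimately show ?thesis by simp
  qed
qed

lemma tendsto_integral_polynomial_exp_weight:
  fixes \<phi> p :: "real \<Rightarrow> real"
  assumes cont: "continuous_on {0..} \<phi>"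
    and lim: "\<And>s. s > 0 \<Longrightarrow> ((\<lambda>T. integral {0..T} (\<lambda>u. exp (- s * u) * \<phi> u)) \<longlongrightarrow> 0) at_top"
    and p: "real_polynomial_function p"
  shows "((\<lambda>T. integral {0..T} (\<lambda>u. exp (- u) * p (exp (- u)) * \<phi> u)) \<longlongrightarrow> 0) at_top"
proof -
  obtain a n where p_eq: "p = (\<lambda>x. \<Sum>i\<le>n. a i * x ^ i)"
    using p real_polynomial_function_iff_sum by auto
  have weight_eq: "exp (- u) * p (exp (- u)) * \<phi> u = (\<Sum>i\<le>n. a i * (exp (- (real i + 1) * u) * \<phi> u))" for u
  proof -
    have "exp (- (real i + 1) * u) = exp (- u) * exp (- u) ^ i" for i
      by (simp add: exp_of_nat_mult[symmetric] flip: exp_add) (simp add: algebra_simps)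
    then show ?thesis unfolding p_eq by (simp add: sum_distrib_left sum_distrib_right algebra_simps)
  qed
  have "integral {0..T} (\<lambda>u. exp (- u) * p (exp (- u)) * \<phi> u)
        = (\<Sum>i\<le>n. a i * integral {0..T} (\<lambda>u. exp (- (real i + 1) * u) * \<phi> u))" for T
    unfolding weight_eq using continuous_on_subset[OF cont, of "{0..T}"]
    by (subst integral_sum) (auto intro!: integrable_continuous_interval continuous_intros)
  moreover have "((\<lambda>T. \<Sum>i\<le>n. a i * integral {0..T} (\<lambda>u. exp (- (real i + 1) * u) * \<phi> u))
                   \<longlongrightarrow> (\<Sum>i\<le>n. a i * 0)) at_top"
    by (intro tendsto_intros lim) auto
  ultimately show ?thesis by simp
qed

lemma integral_exp_weight_approx_le:
  fixes \<phi> p :: "real \<Rightarrow> real"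
  assumes T: "T \<ge> 0" and cont: "continuous_on {0..T} \<phi>" and p: "continuous_on UNIV p"
    and approx: "\<And>u. u \<in> {0..T} \<Longrightarrow> \<bar>exp (- u) * \<phi> u - p (exp (- u))\<bar> \<le> e"
    and bound: "\<And>u. u \<in> {0..T} \<Longrightarrow> \<bar>\<phi> u\<bar> \<le> M"
  shows "\<bar>integral {0..T} (\<lambda>u. (exp (- u) * \<phi> u)\<^sup>2)
          - integral {0..T} (\<lambda>u. exp (- u) * p (exp (- u)) * \<phi> u)\<bar> \<le> e * M"
proof -
  have cont_p: "continuous_on {0..T} (\<lambda>u. p (exp (- u)))"
    by (intro continuous_on_compose2[OF p] continuous_intros) auto
  have "integral {0..T} (\<lambda>u. (exp (- u) * \<phi> u)\<^sup>2) - integral {0..T} (\<lambda>u. exp (- u) * p (exp (- u)) * \<phi> u)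
      = integral {0..T} (\<lambda>u. exp (- u) * (exp (- u) * \<phi> u - p (exp (- u))) * \<phi> u)"
    by (subst integral_diff[symmetric])
      (auto intro!: integrable_continuous_interval continuous_intros cont cont_p
        simp: power2_eq_square algebra_simps)
  also have "\<bar>\<dots>\<bar> \<le> integral {0..T} (\<lambda>u. exp (- u) * (e * M))"
  proof -
    have "norm (integral {0..T} (\<lambda>u. exp (- u) * (exp (- u) * \<phi> u - p (exp (- u))) * \<phi> u))
        \<le> integral {0..T} (\<lambda>u. exp (- u) * (e * M))"
    proof (rule integral_norm_bound_integral)
      fix u assume u: "u \<in> {0..T}"
      have "\<bar>exp (- u) * (exp (- u) * \<phi> u - p (exp (- u))) * \<phi> u\<bar>
            = exp (- u) * (\<bar>exp (- u) * \<phi> u - p (exp (- u))\<bar> * \<bar>\<phi> u\<bar>)"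
        by (simp add: abs_mult)
      also have "\<dots> \<le> exp (- u) * (e * M)"
        using approx[OF u] bound[OF u] by (intro mult_left_mono mult_mono) auto
      finally show "norm (exp (- u) * (exp (- u) * \<phi> u - p (exp (- u))) * \<phi> u) \<le> exp (- u) * (e * M)"
        by simp
    qed (auto intro!: integrable_continuous_interval continuous_intros cont cont_p)
    then show ?thesis by simp
  qed
  also have "\<dots> = e * M * (1 - exp (- T))"
  proof -
    have "((\<lambda>u. exp (- u) * (e * M)) has_integral (- exp (- T) * (e * M) - (- exp (- 0) * (e * M)))) {0..T}"
      using T by (intro fundamental_theorem_of_calculus)
        (auto intro!: derivative_eq_intros simp: has_real_derivative_iff_has_vector_derivative[symmetric])
    then have "integral {0..T} (\<lambda>u. exp (- u) * (e * M)) = - exp (- T) * (e * M) - (- exp (- 0) * (e * M))"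
      by (rule integral_unique)
    then show ?thesis by (simp add: algebra_simps)
  qed
  also have "\<dots> \<le> e * M"
    using approx[of 0] bound[of 0] T by (simp add: mult_left_le)
  finally show ?thesis .
qed

text \<open>Lerch's theorem for bounded continuous functions: Weierstrass approximation in the variable
  \<open>exp (- u)\<close> shows that \<open>exp (- u) * \<phi> u\<close> is orthogonal to itself.\<close>
lemma laplace_vanishing_imp_zero:
  fixes \<phi> :: "real \<Rightarrow> real"
  assumes cont: "continuous_on {0..} \<phi>" and bound: "\<And>u. u \<ge> 0 \<Longrightarrow> \<bar>\<phi> u\<bar> \<le> M"
    and lim: "\<And>s. s > 0 \<Longrightarrow> ((\<lambda>T. integral {0..T} (\<lambda>u. exp (- s * u) * \<phi> u)) \<longlongrightarrow> 0) at_top"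
    and u: "u \<ge> 0"
  shows "\<phi> u = 0"
proof -
  define J where "J = (\<lambda>T. integral {0..T} (\<lambda>u. (exp (- u) * \<phi> u)\<^sup>2))"
  have cont_sq: "continuous_on {0..T} (\<lambda>u. (exp (- u) * \<phi> u)\<^sup>2)" for T
    using continuous_on_subset[OF cont, of "{0..T}"] by (auto intro!: continuous_intros)
  have M: "M \<ge> 0" using bound[of 0] by simp
  have J_small: "J T0 \<le> e * (M + 1)" if T0: "T0 \<ge> 0" and e: "e > 0" for T0 e
  proof -
    define G where "G = (\<lambda>x::real. if x = 0 then 0 else x * \<phi> (- ln x))"
    have "continuous_on {0..1} G" unfolding G_def by (rule continuous_on_exp_substitution[OF cont bound])
    then obtain p where p: "real_polynomial_function p" and approx: "\<And>x. x \<in> {0..1} \<Longrightarrow> \<bar>G x - p x\<bar> < e"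
      using Stone_Weierstrass_real_polynomial_function[OF compact_Icc _ e] by blast
    have "((\<lambda>T. integral {0..T} (\<lambda>u. exp (- u) * p (exp (- u)) * \<phi> u)) \<longlongrightarrow> 0) at_top"
      by (rule tendsto_integral_polynomial_exp_weight[OF cont _ p]) (rule lim)
    from tendstoD[OF this e]
    obtain N where N: "\<And>T. T \<ge> N \<Longrightarrow> \<bar>integral {0..T} (\<lambda>u. exp (- u) * p (exp (- u)) * \<phi> u)\<bar> < e"
      unfolding eventually_at_top_linorder by auto
    define T where "T = max N T0"
    have PT: "\<bar>integral {0..T} (\<lambda>u. exp (- u) * p (exp (- u)) * \<phi> u)\<bar> < e" and T: "T \<ge> T0"
      using N[of T] unfolding T_def by auto
    have "\<bar>J T - integral {0..T} (\<lambda>u. exp (- u) * p (exp (- u)) * \<phi> u)\<bar> \<le> e * M"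
      unfolding J_def
    proof (rule integral_exp_weight_approx_le)
      fix u assume u: "u \<in> {0..T}"
      have "G (exp (- u)) = exp (- u) * \<phi> u" unfolding G_def by simp
      then show "\<bar>exp (- u) * \<phi> u - p (exp (- u))\<bar> \<le> e" using approx[of "exp (- u)"] u by simp
    qed (use T T0 bound continuous_on_subset[OF cont] p in
         \<open>auto intro: continuous_on_polymonial_function simp: real_polynomial_function_eq\<close>)
    moreover have "J T0 \<le> J T" unfolding J_def using T T0
      by (intro integral_subset_le integrable_continuous_interval cont_sq) auto
    ultimately show ?thesis using PT by (simp add: algebra_simps)
  qed
  have "J (u + 1) \<le> 0"
  proof (rule field_le_epsilon)
    fix e :: real assume "e > 0"
    then show "J (u + 1) \<le> 0 + e" using J_small[of "u + 1" "e / (M + 1)"] u M by simp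
  qed
  then have "J (u + 1) = 0" unfolding J_def
    by (intro order.antisym integral_nonneg integrable_continuous_interval cont_sq) auto
  then have "\<forall>x\<in>{0..u + 1}. (exp (- x) * \<phi> x)\<^sup>2 = 0"
    using integral_eq_0_iff[OF cont_sq[of "u + 1"]] u unfolding J_def by simp
  then show ?thesis using u by simp
qed

lemma laplace_transform_unique:
  fixes h :: "real \<Rightarrow> real"
  assumes laplace: "\<And>s. s > 0 \<Longrightarrow> ((\<lambda>t. exp (- s * t) * h t) has_integral 0) {0..}"
    and rcont: "\<And>t. t \<ge> 0 \<Longrightarrow> continuous (at_right t) h"
    and t: "t \<ge> 0"
  shows "h t = 0"
proof -
  define \<phi> where "\<phi> = (\<lambda>y. integral {0..y} (\<lambda>u. exp (- u) * h u))"
  have int: "\<And>s. s > 0 \<Longrightarrow> (\<lambda>t. exp (- s * t) * h t) integrable_on {0..}"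
    using laplace by blast
  have int1: "(\<lambda>u. exp (- u) * h u) integrable_on {0..b}" for b
    using int[of 1] by (intro integrable_on_subinterval[of _ "{0..}"]) auto
  have \<phi>_cont: "continuous_on {0..} \<phi>"
    unfolding \<phi>_def by (intro continuous_on_atLeast_if_atLeastAtMost indefinite_integral_continuous_1 int1)
  have \<phi>_lim: "(\<phi> \<longlongrightarrow> 0) at_top"
    using has_integral_atLeast_imp_tendsto[OF laplace[of 1]] by (simp add: \<phi>_def)
  obtain M where M: "\<And>u. u \<ge> 0 \<Longrightarrow> \<bar>\<phi> u\<bar> \<le> M"
    using continuous_on_atLeast_tendsto_bounded[OF \<phi>_cont \<phi>_lim] by blast
  have \<phi>_laplace: "((\<lambda>T. integral {0..T} (\<lambda>u. exp (- s * u) * \<phi> u)) \<longlongrightarrow> 0) at_top" if s: "s > 0" for s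
  proof -
    have "filterlim (\<lambda>T. - s * T) at_bot at_top"
      using s by (intro filterlim_tendsto_neg_mult_at_bot[OF tendsto_const _ filterlim_ident]) simp
    then have "((\<lambda>T. exp (- s * T)) \<longlongrightarrow> 0) at_top"
      by (rule filterlim_compose[OF exp_at_bot])
    then have "((\<lambda>T. (integral {0..T} (\<lambda>u. exp (- (s + 1) * u) * h u) - exp (- s * T) * \<phi> T) / s)
            \<longlongrightarrow> (0 - 0 * 0) / s) at_top"
      using s by (intro tendsto_intros has_integral_atLeast_imp_tendsto laplace \<phi>_lim) auto
    moreover have "eventually (\<lambda>T. (integral {0..T} (\<lambda>u. exp (- (s + 1) * u) * h u) - exp (- s * T) * \<phi> T) / s
              = integral {0..T} (\<lambda>u. exp (- s * u) * \<phi> u)) at_top"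
      using eventually_ge_at_top[of 0]
      by eventually_elim (use laplace_integration_by_parts[OF int rcont s] s in \<open>simp add: \<phi>_def field_simps\<close>)
    ultimately show ?thesis by (simp add: tendsto_cong)
  qed
  have \<phi>_zero: "\<phi> u = 0" if "u \<ge> 0" for u
    by (rule laplace_vanishing_imp_zero[OF \<phi>_cont M \<phi>_laplace that])
  \<comment> \<open>\<open>\<phi>\<close> has right derivative \<open>exp (- t) * h t\<close> at \<open>t\<close>, but it is identically zero.\<close>
  have "continuous (at t within {t..}) h" using rcont[OF t] by (simp add: at_within_Ici_at_right)
  then have "continuous (at t within {t..t+1}) h" by (rule continuous_within_subset) auto
  then have "(\<phi> has_real_derivative exp (- t) * h t) (at t within {t..t+1})"
    unfolding \<phi>_def using t by (intro integral_has_real_derivative_at_right int1) (auto intro!: continuous_intros)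
  moreover have "(\<phi> has_real_derivative 0) (at t within {t..t+1})"
    by (rule has_field_derivative_transform_within[OF DERIV_const zero_less_one]) (use \<phi>_zero t in auto)
  moreover have "at t within {t..t+1} \<noteq> bot" by (simp add: at_within_Icc_at_right)
  ultimately show ?thesis using has_field_derivative_unique by fastforce
qed

definition laplace_stieltjes :: "real measure \<Rightarrow> real \<Rightarrow> real" where
  "laplace_stieltjes M s = (\<integral>x. exp (- s * x) \<partial>M)"

lemma sets_mix [simp, measurable_cong]: "sets (mix e M N) = sets M"
  by (simp add: mix_def)

lemma space_mix [simp]: "space (mix e M N) = space M"
  by (simp add: mix_def)

lemma emeasure_mix:
  assumes sets_N: "sets N = sets M"
  shows "emeasure (mix e M N) A = ennreal (1 - e) * emeasure M A + ennreal e * emeasure N A"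
    (is "_ = ?\<mu> A")
proof (cases "A \<in> sets M")
  case True
  show ?thesis unfolding mix_def
  proof (rule emeasure_measure_of_sigma)
    show "sigma_algebra (space M) (sets M)" ..
    show "positive (sets M) ?\<mu>" by (simp add: positive_def)
    show "countably_additive (sets M) ?\<mu>"
    proof (rule countably_additiveI)
      fix A :: "nat \<Rightarrow> _" assume "range A \<subseteq> sets M" "disjoint_family A"
      then have A: "range A \<subseteq> sets M" "range A \<subseteq> sets N" "disjoint_family A" using sets_N by auto
      have "(\<Sum>i. ?\<mu> (A i)) = ennreal (1 - e) * (\<Sum>i. emeasure M (A i)) + ennreal e * (\<Sum>i. emeasure N (A i))"
        by (simp add: suminf_add[symmetric])
      also have "\<dots> = ?\<mu> (\<Union>i. A i)" using A by (simp add: suminf_emeasure)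
      finally show "(\<Sum>i. ?\<mu> (A i)) = ?\<mu> (\<Union>i. A i)" .
    qed
  qed (fact True)
qed (simp add: emeasure_notin_sets sets_N)

lemma mix_0:
  assumes "sets N = sets M"
  shows "mix 0 M N = M"
  by (rule measure_eqI) (simp_all add: emeasure_mix[OF assms])

lemma nn_integral_mix:
  assumes sets_N: "sets N = sets M" and f: "f \<in> borel_measurable M"
  shows "(\<integral>\<^sup>+x. f x \<partial>mix e M N) = ennreal (1 - e) * (\<integral>\<^sup>+x. f x \<partial>M) + ennreal e * (\<integral>\<^sup>+x. f x \<partial>N)"
  using f
proof induction
  case (cong f g)
  have "space N = space M" using sets_N by (rule sets_eq_imp_space_eq)
  with cong show ?case
    by (simp add: cong.hyps cong: nn_integral_cong_simp)
next
  case (set A)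
  then show ?case using sets_N by (simp add: emeasure_mix)
next
  case (mult f c)
  have f_N: "f \<in> borel_measurable N" using mult(2) by (simp add: measurable_cong_sets[OF sets_N refl])
  have f_mix: "f \<in> borel_measurable (mix e M N)" using mult(2) by (simp add: measurable_cong_sets[OF sets_mix refl])
  have "(\<integral>\<^sup>+x. c * f x \<partial>mix e M N) = c * (ennreal (1 - e) * nn_integral M f + ennreal e * nn_integral N f)"
    using nn_integral_cmult[OF f_mix] mult(4) by simp
  also have "\<dots> = ennreal (1 - e) * (c * nn_integral M f) + ennreal e * (c * nn_integral N f)"
    by (simp only: distrib_left ac_simps)
  also have "\<dots> = ennreal (1 - e) * (\<integral>\<^sup>+x. c * f x \<partial>M) + ennreal e * (\<integral>\<^sup>+x. c * f x \<partial>N)"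
    using nn_integral_cmult[OF mult(2)] nn_integral_cmult[OF f_N] by simp
  finally show ?case .
next
  case (add f g)
  have "f \<in> borel_measurable N" "g \<in> borel_measurable N" using add(1,3) by (simp_all add: measurable_cong_sets[OF sets_N refl])
  moreover have "f \<in> borel_measurable (mix e M N)" "g \<in> borel_measurable (mix e M N)"
    using add(1,3) by (simp_all add: measurable_cong_sets[OF sets_mix refl])
  ultimately show ?case using add(6,7) add(1,3)
    by (simp add: nn_integral_add distrib_left ac_simps)
next
  case (seq U)
  have U_N: "\<And>i. U i \<in> borel_measurable N" using seq(1) by (simp add: measurable_cong_sets[OF sets_N refl])
  have U_mix: "\<And>i. U i \<in> borel_measurable (mix e M N)" using seq(1) by (simp add: measurable_cong_sets[OF sets_mix refl])
  have SUP_eq: "integral\<^sup>N X (Sup (range U)) = (SUP i. integral\<^sup>N X (U i))"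
    if "\<And>i. U i \<in> borel_measurable X" for X :: "real measure"
  proof -
    have "Sup (range U) = (\<lambda>x. SUP i. U i x)" by (rule ext) (simp add: SUP_apply[symmetric])
    then show ?thesis using nn_integral_monotone_convergence_SUP[OF seq(3) that] by simp
  qed
  have "nn_integral (mix e M N) (Sup (range U)) = (SUP i. nn_integral (mix e M N) (U i))"
    by (rule SUP_eq[OF U_mix])
  also have "\<dots> = (SUP i. ennreal (1 - e) * nn_integral M (U i) + ennreal e * nn_integral N (U i))"
    using seq by simp
  also have "\<dots> = (SUP i. ennreal (1 - e) * nn_integral M (U i)) + (SUP i. ennreal e * nn_integral N (U i))"
  proof (rule ennreal_SUP_add[of "\<lambda>i. ennreal (1 - e) * integral\<^sup>N M (U i)" "\<lambda>i. ennreal e * integral\<^sup>N N (U i)", simplified])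
    show "incseq (\<lambda>i. ennreal (1 - e) * integral\<^sup>N M (U i))"
      using seq(3) unfolding incseq_def le_fun_def by (auto intro!: mult_left_mono nn_integral_mono)
    show "incseq (\<lambda>i. ennreal e * integral\<^sup>N N (U i))"
      using seq(3) unfolding incseq_def le_fun_def by (auto intro!: mult_left_mono nn_integral_mono)
  qed
  also have "\<dots> = ennreal (1 - e) * (SUP i. nn_integral M (U i)) + ennreal e * (SUP i. nn_integral N (U i))"
    by (simp add: SUP_mult_left_ennreal)
  also have "\<dots> = ennreal (1 - e) * nn_integral M (Sup (range U)) + ennreal e * nn_integral N (Sup (range U))"
    using SUP_eq[OF seq(1)] SUP_eq[OF U_N] by simp
  finally show ?case .
qed


lemma AE_mix:
  assumes sets_N: "sets N = sets M" and "AE x in M. P x" "AE x in N. P x"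
    and meas: "{x \<in> space M. \<not> P x} \<in> sets M"
  shows "AE x in mix e M N. P x"
proof -
  have space_N: "space N = space M" using sets_N by (rule sets_eq_imp_space_eq)
  have "emeasure M {x \<in> space M. \<not> P x} = 0" using assms(2) meas AE_iff_measurable by blast
  moreover have "emeasure N {x \<in> space M. \<not> P x} = 0" using assms(3) meas AE_iff_measurable space_N sets_N by metis
  ultimately have "emeasure (mix e M N) {x \<in> space M. \<not> P x} = 0" by (simp add: emeasure_mix[OF sets_N])
  then show ?thesis using meas by (subst AE_iff_measurable) auto
qed

lemma integral_mix:
  fixes f :: "real \<Rightarrow> real"
  assumes sets_N: "sets N = sets M" and sets_M: "sets M = sets borel"
    and f: "f \<in> borel_measurable borel"
    and nonneg_M: "AE x in M. 0 \<le> f x" and nonneg_N: "AE x in N. 0 \<le> f x"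
    and int_M: "integrable M f" and int_N: "integrable N f"
    and e: "0 \<le> e" "e \<le> 1"
  shows "(\<integral>x. f x \<partial>mix e M N) = (1 - e) * (\<integral>x. f x \<partial>M) + e * (\<integral>x. f x \<partial>N)"
proof -
  have f_M: "f \<in> borel_measurable M" using f by (simp add: measurable_cong_sets[OF sets_M refl])
  have f_mix: "f \<in> borel_measurable (mix e M N)" using f_M by (simp add: measurable_cong_sets[OF sets_mix refl])
  have meas: "{x \<in> space M. \<not> 0 \<le> f x} \<in> sets M" using f_M by measurable
  have nonneg_mix: "AE x in mix e M N. 0 \<le> f x" by (rule AE_mix[OF sets_N nonneg_M nonneg_N meas])
  have "integral\<^sup>L (mix e M N) f = enn2real (\<integral>\<^sup>+x. ennreal (f x) \<partial>mix e M N)"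
    by (rule integral_eq_nn_integral[OF f_mix nonneg_mix])
  also have "\<dots> = enn2real (ennreal (1 - e) * ennreal (integral\<^sup>L M f) + ennreal e * ennreal (integral\<^sup>L N f))"
    using nn_integral_mix[OF sets_N, of "\<lambda>x. ennreal (f x)" e] f_M
      nn_integral_eq_integral[OF int_M nonneg_M] nn_integral_eq_integral[OF int_N nonneg_N] by simp
  also have "\<dots> = (1 - e) * integral\<^sup>L M f + e * integral\<^sup>L N f"
  proof -
    have "0 \<le> integral\<^sup>L M f" "0 \<le> integral\<^sup>L N f" using nonneg_M nonneg_N by (simp_all add: integral_nonneg_AE)
    then show ?thesis using e by (simp add: ennreal_mult''[symmetric] ennreal_plus[symmetric] del: ennreal_plus)
  qed
  finally show ?thesis .
qed

lemma integrable_exp_neg: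
  fixes M :: "real measure"
  assumes sets_M: "sets M = sets borel" and fin: "finite_measure M"
    and nonneg: "AE x in M. 0 \<le> x" and s: "s \<ge> 0"
  shows "integrable M (\<lambda>x. exp (- s * x))"
proof (rule finite_measure.integrable_const_bound[OF fin, of _ 1])
  show "AE x in M. norm (exp (- s * x)) \<le> 1"
    using nonneg by eventually_elim (use s in \<open>simp add: mult_nonneg_nonneg\<close>)
qed (simp add: measurable_cong_sets[OF sets_M])

lemma laplace_stieltjes_le_measure:
  fixes M :: "real measure"
  assumes sets_M: "sets M = sets borel" and fin: "finite_measure M"
    and nonneg: "AE x in M. 0 \<le> x" and s: "s \<ge> 0"
  shows "laplace_stieltjes M s \<le> measure M (space M)"
proof -
  have "(\<integral>x. exp (- s * x) \<partial>M) \<le> (\<integral>x. 1 \<partial>M)"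
    using integrable_exp_neg[OF assms] finite_measure.integrable_const[OF fin] nonneg s
    by (intro integral_mono_AE) (auto elim!: eventually_mono simp: mult_nonneg_nonneg)
  then show ?thesis by (simp add: laplace_stieltjes_def)
qed

lemma nn_integral_survival:
  fixes M :: "real measure"
  assumes sets_M: "sets M = sets borel" and fin: "finite_measure M"
    and g: "g \<in> borel_measurable borel"
  shows "(\<integral>\<^sup>+t. ennreal (g t * indicator {0..} t) * emeasure M {t<..} \<partial>lborel)
       = (\<integral>\<^sup>+x. (\<integral>\<^sup>+t. ennreal (g t * indicator {0..<x} t) \<partial>lborel) \<partial>M)"
proof -
  have pair: "pair_sigma_finite M lborel"
    unfolding pair_sigma_finite_def
    using finite_measure.sigma_finite_measure[OF fin] lborel.sigma_finite_measure_axioms by auto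
  have indicator_eq: "(\<lambda>(x::real, t::real). ennreal (g t * indicator {0..<x} t))
           = (\<lambda>(x, t). ennreal (g t * (if 0 \<le> t \<and> t < x then 1 else 0)))"
    by (auto simp: indicator_def fun_eq_iff)
  have meas_borel: "(\<lambda>(x::real, t::real). ennreal (g t * (if 0 \<le> t \<and> t < x then 1 else 0))) \<in> borel_measurable (borel \<Otimes>\<^sub>M borel)"
    using g by measurable
  have sets_pair: "sets (M \<Otimes>\<^sub>M lborel) = sets (borel \<Otimes>\<^sub>M borel)"
    by (rule sets_pair_measure_cong[OF sets_M]) simp
  have meas: "(\<lambda>(x, t). ennreal (g t * indicator {0..<x} t)) \<in> borel_measurable (M \<Otimes>\<^sub>M lborel)"
    using meas_borel unfolding indicator_eq by (simp add: measurable_cong_sets[OF sets_pair refl])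
  have pointwise: "ennreal (g t * indicator {0..} t) * emeasure M {t<..} = (\<integral>\<^sup>+x. ennreal (g t * indicator {0..<x} t) \<partial>M)" for t
  proof -
    have sets_Ioi: "{t<..} \<in> sets M" using sets_M by simp
    have "(\<integral>\<^sup>+x. ennreal (g t * indicator {0..<x} t) \<partial>M) = (\<integral>\<^sup>+x. ennreal (g t * indicator {0..} t) * indicator {t<..} x \<partial>M)"
      by (intro nn_integral_cong) (auto simp: indicator_def)
    also have "\<dots> = ennreal (g t * indicator {0..} t) * emeasure M {t<..}"
      using sets_Ioi by (simp add: nn_integral_cmult_indicator)
    finally show ?thesis by simp
  qed
  have "(\<integral>\<^sup>+t. ennreal (g t * indicator {0..} t) * emeasure M {t<..} \<partial>lborel)
      = (\<integral>\<^sup>+t. (\<integral>\<^sup>+x. ennreal (g t * indicator {0..<x} t) \<partial>M) \<partial>lborel)"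
    by (simp add: pointwise)
  also have "\<dots> = (\<integral>\<^sup>+x. (\<integral>\<^sup>+t. ennreal (g t * indicator {0..<x} t) \<partial>lborel) \<partial>M)"
    using pair_sigma_finite.Fubini'[OF pair, of "\<lambda>x t. ennreal (g t * indicator {0..<x} t)"] meas by simp
  finally show ?thesis .
qed

lemma nn_integral_survival_laplace:
  fixes M :: "real measure"
  assumes sets_M: "sets M = sets borel" and fin: "finite_measure M"
    and nonneg: "AE x in M. 0 \<le> x" and s: "s > 0"
  shows "(\<integral>\<^sup>+t. ennreal (exp (- s * t) * indicator {0..} t) * emeasure M {t<..} \<partial>lborel)
       = ennreal ((measure M (space M) - laplace_stieltjes M s) / s)"
proof -
  have inner: "(\<integral>\<^sup>+t. ennreal (exp (- s * t) * indicator {0..<x} t) \<partial>lborel) = ennreal ((1 - exp (- s * x)) / s)"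
    if x: "x \<ge> 0" for x
  proof -
    have "((\<lambda>t. exp (- s * t)) has_integral (- exp (- s * x) / s - (- exp (- s * 0) / s))) {0..x}"
      using x s by (intro fundamental_theorem_of_calculus)
        (auto intro!: derivative_eq_intros simp: has_real_derivative_iff_has_vector_derivative[symmetric])
    then have "((\<lambda>t. exp (- s * t)) has_integral ((1 - exp (- s * x)) / s)) {0..x}"
      by (simp add: diff_divide_distrib)
    then have "(\<integral>\<^sup>+t. ennreal (indicator {0..x} t * exp (- s * t)) \<partial>lborel) = ennreal ((1 - exp (- s * x)) / s)"
      by (rule nn_integral_has_integral_lebesgue[rotated]) simp
    moreover have "(\<integral>\<^sup>+t. ennreal (exp (- s * t) * indicator {0..<x} t) \<partial>lborel)
        = (\<integral>\<^sup>+t. ennreal (indicator {0..x} t * exp (- s * t)) \<partial>lborel)"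
      by (intro nn_integral_cong_AE) (use AE_lborel_singleton[of x] in \<open>eventually_elim, auto simp: indicator_def\<close>)
    ultimately show ?thesis by simp
  qed
  have "integrable M (\<lambda>x. 1 - exp (- s * x))"
    using integrable_exp_neg[OF sets_M fin nonneg, of s] s finite_measure.integrable_const[OF fin]
    by (intro Bochner_Integration.integrable_diff) auto
  then have int: "integrable M (\<lambda>x. (1 - exp (- s * x)) / s)" by simp
  have "(\<integral>\<^sup>+t. ennreal (exp (- s * t) * indicator {0..} t) * emeasure M {t<..} \<partial>lborel)
       = (\<integral>\<^sup>+x. ennreal ((1 - exp (- s * x)) / s) \<partial>M)"
  proof -
    have "(\<integral>\<^sup>+t. ennreal (exp (- s * t) * indicator {0..} t) * emeasure M {t<..} \<partial>lborel)
       = (\<integral>\<^sup>+x. (\<integral>\<^sup>+t. ennreal (exp (- s * t) * indicator {0..<x} t) \<partial>lborel) \<partial>M)"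
      by (rule nn_integral_survival[OF sets_M fin]) simp
    also have "\<dots> = (\<integral>\<^sup>+x. ennreal ((1 - exp (- s * x)) / s) \<partial>M)"
      by (intro nn_integral_cong_AE) (use nonneg inner in \<open>auto elim!: eventually_mono\<close>)
    finally show ?thesis .
  qed
  also have "\<dots> = ennreal (\<integral>x. (1 - exp (- s * x)) / s \<partial>M)"
    using nonneg s by (intro nn_integral_eq_integral int) (auto elim!: eventually_mono simp: mult_nonneg_nonneg)
  also have "(\<integral>x. (1 - exp (- s * x)) / s \<partial>M) = (measure M (space M) - laplace_stieltjes M s) / s"
  proof -
    have "(\<integral>x. 1 - exp (- s * x) \<partial>M) = (\<integral>x. 1 \<partial>M) - (\<integral>x. exp (- s * x) \<partial>M)"
      using integrable_exp_neg[OF sets_M fin nonneg, of s] s finite_measure.integrable_const[OF fin]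
      by (intro Bochner_Integration.integral_diff) auto
    then show ?thesis by (simp add: laplace_stieltjes_def)
  qed
  finally show ?thesis .
qed

lemma nn_integral_survival_mean:
  fixes M :: "real measure"
  assumes sets_M: "sets M = sets borel" and fin: "finite_measure M"
    and nonneg: "AE x in M. 0 \<le> x" and int: "integrable M (\<lambda>x. x)"
  shows "(\<integral>\<^sup>+t. ennreal (1 * indicator {0..} t) * emeasure M {t<..} \<partial>lborel) = ennreal (\<integral>x. x \<partial>M)"
proof -
  have "(\<integral>\<^sup>+t. ennreal (1 * indicator {0..} t) * emeasure M {t<..} \<partial>lborel)
       = (\<integral>\<^sup>+x. (\<integral>\<^sup>+t. ennreal (1 * indicator {0..<x} t) \<partial>lborel) \<partial>M)"
    by (rule nn_integral_survival[OF sets_M fin]) simp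
  also have "\<dots> = (\<integral>\<^sup>+x. ennreal x \<partial>M)"
    by (intro nn_integral_cong_AE) (use nonneg in \<open>auto elim!: eventually_mono simp: ennreal_indicator emeasure_lborel_Ico\<close>)
  also have "\<dots> = ennreal (\<integral>x. x \<partial>M)" by (rule nn_integral_eq_integral[OF int nonneg])
  finally show ?thesis .
qed

lemma survival_eq_minus_cdf:
  fixes M :: "real measure"
  assumes sets_M: "sets M = sets borel" and fin: "finite_measure M"
  shows "measure M {t<..} = measure M (space M) - cdf M t"
proof -
  have "space M - {..t} = {t<..}" using sets_eq_imp_space_eq[OF sets_M] by auto
  then show ?thesis
    using finite_measure.finite_measure_compl[OF fin, of "{..t}"] sets_M by (simp add: cdf_def)
qed

lemma borel_measurable_cdf:
  fixes M :: "real measure"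
  assumes M_borel: "sets M = sets borel" and fin: "finite_measure M"
  shows "(\<lambda>x. measure M {..x}) \<in> borel_measurable borel"
proof -
  interpret finite_borel_measure M
    using fin M_borel by (simp add: finite_borel_measure_def finite_borel_measure_axioms_def)
  have "mono (cdf M)" by (simp add: mono_def cdf_nondecreasing)
  then show ?thesis unfolding cdf_def[symmetric] by (rule borel_measurable_mono)
qed

lemma borel_measurable_survival:
  fixes M :: "real measure"
  assumes sets_M: "sets M = sets borel" and fin: "finite_measure M"
  shows "(\<lambda>t. measure M {t<..}) \<in> borel_measurable borel"
proof -
  have "(\<lambda>t. measure M (space M) - measure M {..t}) \<in> borel_measurable borel"
    using borel_measurable_cdf[OF sets_M fin] by simp
  then show ?thesis by (simp add: survival_eq_minus_cdf[OF sets_M fin] cdf_def)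
qed

lemma continuous_at_right_survival:
  fixes M :: "real measure"
  assumes M_borel: "sets M = sets borel" and fin: "finite_measure M"
  shows "continuous (at_right t) (\<lambda>t. measure M {t<..})"
proof -
  interpret finite_borel_measure M using fin M_borel by (simp add: finite_borel_measure_def finite_borel_measure_axioms_def)
  show ?thesis unfolding survival_eq_minus_cdf[OF M_borel fin] by (intro continuous_intros cdf_is_right_cont)
qed

lemma has_integral_survival_laplace:
  fixes M :: "real measure"
  assumes sets_M: "sets M = sets borel" and fin: "finite_measure M"
    and nonneg: "AE x in M. 0 \<le> x" and s: "s > 0"
  shows "((\<lambda>t. exp (- s * t) * measure M {t<..}) has_integral
            (measure M (space M) - laplace_stieltjes M s) / s) {0..}"
proof -
  define f where "f = (\<lambda>t. exp (- s * t) * indicator {0..} t * measure M {t<..})"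
  have "(\<integral>\<^sup>+t. ennreal (f t) \<partial>lborel) = (\<integral>\<^sup>+t. ennreal (exp (- s * t) * indicator {0..} t) * emeasure M {t<..} \<partial>lborel)"
    unfolding f_def using fin by (intro nn_integral_cong) (simp add: finite_measure.emeasure_eq_measure ennreal_mult'')
  also have "\<dots> = ennreal ((measure M (space M) - laplace_stieltjes M s) / s)"
    by (rule nn_integral_survival_laplace[OF assms])
  finally have "(f has_integral (measure M (space M) - laplace_stieltjes M s) / s) UNIV"
    using laplace_stieltjes_le_measure[OF sets_M fin nonneg] s borel_measurable_survival[OF sets_M fin]
    by (intro nn_integral_has_integral) (auto simp: f_def)
  moreover have "f = (\<lambda>t. if t \<in> {0..} then exp (- s * t) * measure M {t<..} else 0)"
    unfolding f_def by (auto simp: indicator_def)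
  ultimately have "((\<lambda>t. if t \<in> {0..} then exp (- s * t) * measure M {t<..} else 0) has_integral
      (measure M (space M) - laplace_stieltjes M s) / s) UNIV"
    by (simp only:)
  then show ?thesis unfolding has_integral_restrict_UNIV .
qed

lemma AE_convolution_nonneg:
  fixes M N :: "real measure"
  assumes sets_M: "sets M = sets borel" and sets_N: "sets N = sets borel"
    and fin_M: "finite_measure M" and fin_N: "finite_measure N"
    and nonneg_M: "AE x in M. 0 \<le> x" and nonneg_N: "AE x in N. 0 \<le> x"
  shows "AE x in M \<star> N. 0 \<le> x"
proof -
  have "emeasure (M \<star> N) {..<0} = (\<integral>\<^sup>+x. \<integral>\<^sup>+y. indicator {..<0} (x + y) \<partial>N \<partial>M)"
    by (rule convolution_emeasure'[OF _ fin_M fin_N sets_N sets_M]) simp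
  also have "\<dots> = (\<integral>\<^sup>+x. 0 \<partial>M)"
  proof (rule nn_integral_cong_AE)
    show "AE x in M. (\<integral>\<^sup>+y. indicator {..<0} (x + y) \<partial>N) = 0" using nonneg_M
    proof eventually_elim
      case (elim x)
      have "(\<integral>\<^sup>+y. indicator {..<0} (x + y) \<partial>N) = (\<integral>\<^sup>+y. 0 \<partial>N)"
        by (rule nn_integral_cong_AE) (use nonneg_N elim in \<open>auto elim!: eventually_mono simp: indicator_def\<close>)
      then show ?case by simp
    qed
  qed
  finally have "emeasure (M \<star> N) {..<0} = 0" by simp
  moreover have "{x \<in> space (M \<star> N). \<not> 0 \<le> x} = {..<0::real}" by auto
  ultimately show ?thesis by (subst AE_iff_measurable) auto
qed

lemma laplace_stieltjes_convolution:
  fixes M N :: "real measure"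
  assumes sets_M: "sets M = sets borel" and sets_N: "sets N = sets borel"
    and fin_M: "finite_measure M" and fin_N: "finite_measure N"
  shows "laplace_stieltjes (M \<star> N) s = laplace_stieltjes M s * laplace_stieltjes N s"
proof -
  have via_nn: "laplace_stieltjes K s = enn2real (\<integral>\<^sup>+x. ennreal (exp (- s * x)) \<partial>K)"
    if "sets K = sets borel" for K :: "real measure"
    unfolding laplace_stieltjes_def
    by (rule integral_eq_nn_integral) (auto simp: measurable_cong_sets[OF that refl])
  have "(\<integral>\<^sup>+x. ennreal (exp (- s * x)) \<partial>(M \<star> N)) = (\<integral>\<^sup>+x. \<integral>\<^sup>+y. ennreal (exp (- s * (x + y))) \<partial>N \<partial>M)"
    by (rule nn_integral_convolution[OF fin_M fin_N sets_N sets_M]) simp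
  also have "\<dots> = (\<integral>\<^sup>+x. ennreal (exp (- s * x)) * (\<integral>\<^sup>+y. ennreal (exp (- s * y)) \<partial>N) \<partial>M)"
  proof (rule nn_integral_cong)
    fix x
    have "(\<integral>\<^sup>+y. ennreal (exp (- s * (x + y))) \<partial>N) = (\<integral>\<^sup>+y. ennreal (exp (- s * x)) * ennreal (exp (- s * y)) \<partial>N)"
      by (intro nn_integral_cong) (simp add: ennreal_mult[symmetric] exp_add[symmetric] algebra_simps)
    also have "\<dots> = ennreal (exp (- s * x)) * (\<integral>\<^sup>+y. ennreal (exp (- s * y)) \<partial>N)"
      by (rule nn_integral_cmult) (simp add: measurable_cong_sets[OF sets_N refl])
    finally show "(\<integral>\<^sup>+y. ennreal (exp (- s * (x + y))) \<partial>N) = ennreal (exp (- s * x)) * (\<integral>\<^sup>+y. ennreal (exp (- s * y)) \<partial>N)" .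
  qed
  also have "\<dots> = (\<integral>\<^sup>+x. ennreal (exp (- s * x)) \<partial>M) * (\<integral>\<^sup>+y. ennreal (exp (- s * y)) \<partial>N)"
    by (rule nn_integral_multc) (simp add: measurable_cong_sets[OF sets_M refl])
  finally show ?thesis
    using via_nn[OF sets_M] via_nn[OF sets_N] via_nn[of "M \<star> N"] by (simp add: enn2real_mult)
qed

lemma nonneg_distr_convolution:
  assumes M: "nonneg_distr M" and N: "nonneg_distr N"
  shows "nonneg_distr (M \<star> N)"
proof -
  have sets: "sets M = sets borel" "sets N = sets borel" and prob: "prob_space M" "prob_space N"
    and nonneg: "AE x in M. 0 \<le> x" "AE x in N. 0 \<le> x"
    using M N unfolding nonneg_distr_def by auto
  have fin: "finite_measure M" "finite_measure N" using prob by (simp_all add: prob_space_def)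
  have fin_MN: "finite_measure (M \<star> N)" by (rule convolution_finite[OF fin sets(2,1)])
  \<comment> \<open>The total mass is the Laplace-Stieltjes transform at 0.\<close>
  have "measure (M \<star> N) (space (M \<star> N)) = 1"
    using laplace_stieltjes_convolution[OF sets fin, of 0] prob
    by (simp add: laplace_stieltjes_def prob_space.prob_space)
  then have "prob_space (M \<star> N)"
    by (intro prob_spaceI) (simp add: finite_measure.emeasure_eq_measure[OF fin_MN])
  then show ?thesis
    unfolding nonneg_distr_def using AE_convolution_nonneg[OF sets fin nonneg] by simp
qed

lemma nn_integral_excess:
  fixes F :: "real measure" and g :: "real \<Rightarrow> real"
  assumes F: "nonneg_distr F" and mean_pos: "mean F > 0"
    and g: "g \<in> borel_measurable borel" "\<And>x. 0 \<le> g x"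
  shows "(\<integral>\<^sup>+x. g x \<partial>excess F)
       = (\<integral>\<^sup>+t. ennreal (g t * indicator {0..} t) * emeasure F {t<..} \<partial>lborel) * ennreal (1 / mean F)"
proof -
  have sets_F: "sets F = sets borel" and prob: "prob_space F" using F unfolding nonneg_distr_def by auto
  then have fin: "finite_measure F" by (simp add: prob_space_def)
  have survival: "1 - measure F {..x} = measure F {x<..}" for x
    using survival_eq_minus_cdf[OF sets_F fin, of x] prob by (simp add: prob_space.prob_space cdf_def)
  have cdf_meas: "(\<lambda>x. measure F {..x}) \<in> borel_measurable borel"
    by (rule borel_measurable_cdf[OF sets_F fin])
  have "(\<integral>\<^sup>+x. g x \<partial>excess F)
      = (\<integral>\<^sup>+x. ennreal (indicator {0..} x * (1 - measure F {..x}) / mean F) * ennreal (g x) \<partial>lborel)"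
    unfolding excess_def using cdf_meas g by (subst nn_integral_density) auto
  also have "\<dots> = (\<integral>\<^sup>+t. ennreal (g t * indicator {0..} t) * emeasure F {t<..} * ennreal (1 / mean F) \<partial>lborel)"
    using g(2) mean_pos
    by (intro nn_integral_cong)
      (simp add: survival finite_measure.emeasure_eq_measure[OF fin] ennreal_mult''[symmetric]
        ennreal_mult'[symmetric] divide_nonneg_pos ac_simps)
  also have "\<dots> = (\<integral>\<^sup>+t. ennreal (g t * indicator {0..} t) * emeasure F {t<..} \<partial>lborel) * ennreal (1 / mean F)"
    using g cdf_meas by (intro nn_integral_multc) (simp add: finite_measure.emeasure_eq_measure[OF fin] flip: survival)
  finally show ?thesis .
qed

lemma nonneg_distr_excess:
  assumes F: "nonneg_distr F" and int: "integrable F (\<lambda>x. x)" and mean_pos: "mean F > 0"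
  shows "nonneg_distr (excess F)"
proof -
  have sets_F: "sets F = sets borel" and prob: "prob_space F" and nonneg: "AE x in F. 0 \<le> x"
    using F unfolding nonneg_distr_def by auto
  have fin: "finite_measure F" using prob by (simp add: prob_space_def)
  have "emeasure (excess F) (space (excess F)) = (\<integral>\<^sup>+x. ennreal 1 \<partial>excess F)" by simp
  also have "\<dots> = ennreal (mean F) * ennreal (1 / mean F)"
    using nn_integral_excess[OF F mean_pos, of "\<lambda>_. 1"]
      nn_integral_survival_mean[OF sets_F _ nonneg int] prob by (simp add: prob_space_def mean_def)
  also have "\<dots> = 1" using mean_pos by (simp add: ennreal_mult''[symmetric])
  finally have "prob_space (excess F)" by (rule prob_spaceI)
  moreover have "AE x in excess F. 0 \<le> x"
    unfolding excess_def using borel_measurable_cdf[OF sets_F fin]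
    by (subst AE_density) (auto simp: indicator_def)
  ultimately show ?thesis unfolding nonneg_distr_def by (simp add: excess_def)
qed

lemma laplace_stieltjes_excess:
  assumes F: "nonneg_distr F" and mean_pos: "mean F > 0" and s: "s > 0"
  shows "laplace_stieltjes (excess F) s = (1 - laplace_stieltjes F s) / (s * mean F)"
proof -
  have sets_F: "sets F = sets borel" and prob: "prob_space F" and nonneg: "AE x in F. 0 \<le> x"
    using F unfolding nonneg_distr_def by auto
  then have fin: "finite_measure F" by (simp add: prob_space_def)
  have "laplace_stieltjes (excess F) s = enn2real (\<integral>\<^sup>+x. exp (- s * x) \<partial>excess F)"
    unfolding laplace_stieltjes_def by (rule integral_eq_nn_integral) (auto simp: excess_def)
  also have "\<dots> = enn2real (ennreal ((1 - laplace_stieltjes F s) / s) * ennreal (1 / mean F))"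
    using nn_integral_excess[OF F mean_pos, of "\<lambda>x. exp (- s * x)"]
      nn_integral_survival_laplace[OF sets_F fin nonneg s] prob by (simp add: prob_space.prob_space)
  also have "\<dots> = (1 - laplace_stieltjes F s) / (s * mean F)"
    using laplace_stieltjes_le_measure[OF sets_F fin nonneg] s mean_pos prob
    by (simp add: enn2real_mult divide_nonneg_pos prob_space.prob_space)
  finally show ?thesis .
qed

lemma mean_eq_0_imp_AE_0:
  assumes F: "nonneg_distr F" and int: "integrable F (\<lambda>x. x)" and mean_0: "mean F = 0"
  shows "AE x in F. x = 0"
  using integral_nonneg_eq_0_iff_AE[OF int] F mean_0 by (simp add: nonneg_distr_def mean_def)

lemma mean_pos_if_heavy_tailed:
  assumes F: "nonneg_distr F" and int: "integrable F (\<lambda>x. x)" and heavy: "heavy_tailed F"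
  shows "mean F > 0"
proof -
  have prob: "prob_space F" and nonneg: "AE x in F. 0 \<le> x" using F unfolding nonneg_distr_def by auto
  have "mean F \<noteq> 0"
  proof
    assume "mean F = 0"
    then have "AE x in F. x = 0" by (rule mean_eq_0_imp_AE_0[OF F int])
    then have "(\<integral>\<^sup>+x. ennreal (exp (1 * x)) \<partial>F) = (\<integral>\<^sup>+x. 1 \<partial>F)"
      by (intro nn_integral_cong_AE) (auto elim!: eventually_mono)
    then have "(\<integral>\<^sup>+x. ennreal (exp (1 * x)) \<partial>F) = 1"
      using prob_space.emeasure_space_1[OF prob] by simp
    moreover have "(\<integral>\<^sup>+x. ennreal (exp (1 * x)) \<partial>F) = \<infinity>"
      using heavy unfolding heavy_tailed_def by (metis zero_less_one)
    ultimately show False by simp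
  qed
  moreover have "mean F \<ge> 0" unfolding mean_def using nonneg by (rule integral_nonneg_AE)
  ultimately show ?thesis by simp
qed

lemma mexp_0: "mexp m T 0 i j = (if i = j then 1 else 0)"
proof -
  have "mexp m T 0 i j = (\<Sum>k. (mpow m T k i j / fact k) * 0 ^ k)"
    unfolding mexp_def by (simp add: mult.commute)
  also have "\<dots> = mpow m T 0 i j / fact 0" by (rule powser_zero)
  finally show ?thesis by simp
qed

lemma mean_pos_if_phase_type:
  assumes PH: "phase_type F" and int: "integrable F (\<lambda>x. x)"
  shows "mean F > 0"
proof -
  have F: "nonneg_distr F" using PH unfolding phase_type_def by auto
  then have prob: "prob_space F" and sets_F: "sets F = sets borel" and nonneg: "AE x in F. 0 \<le> x"
    unfolding nonneg_distr_def by auto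
  obtain m \<alpha> T where \<alpha>: "(\<Sum>i<m. \<alpha> i) = 1"
    and cdf: "\<forall>x\<ge>0. measure F {..x} = 1 - (\<Sum>i<m. \<Sum>j<m. \<alpha> i * mexp m T x i j)"
    using PH unfolding phase_type_def by blast
  \<comment> \<open>A phase-type distribution has no atom at 0, since \<open>exp (T 0)\<close> is the identity.\<close>
  have "measure F {..0} = 1 - (\<Sum>i<m. \<Sum>j<m. \<alpha> i * (if i = j then 1 else 0))"
    using cdf by (simp add: mexp_0)
  also have "\<dots> = 0" using \<alpha> by (simp add: if_distrib sum.delta cong: if_cong)
  finally have no_atom: "measure F {..0} = 0" .
  have "mean F \<noteq> 0"
  proof
    assume "mean F = 0"
    then have "AE x in F. x \<in> {..0}" using mean_eq_0_imp_AE_0[OF F int] by (auto elim!: eventually_mono)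
    then have "measure F {..0} = 1" using prob_space.prob_eq_1[OF prob, of "{..0}"] sets_F by auto
    then show False using no_atom by simp
  qed
  moreover have "mean F \<ge> 0" unfolding mean_def using nonneg by (rule integral_nonneg_AE)
  ultimately show ?thesis by simp
qed

lemma mean_mix:
  assumes F: "nonneg_distr F" "integrable F (\<lambda>x. x)" and G: "nonneg_distr G" "integrable G (\<lambda>x. x)"
    and e: "0 \<le> e" "e \<le> 1"
  shows "mean (mix e F G) = (1 - e) * mean F + e * mean G"
proof -
  have "sets G = sets F" "sets F = sets borel" "AE x in F. 0 \<le> x" "AE x in G. 0 \<le> x"
    using F(1) G(1) unfolding nonneg_distr_def by auto
  then show ?thesis
    unfolding mean_def using integral_mix[where f = "\<lambda>x. x", OF _ _ _ _ _ F(2) G(2) e] by simp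
qed

lemma laplace_stieltjes_mix:
  assumes F: "nonneg_distr F" and G: "nonneg_distr G" and e: "0 \<le> e" "e \<le> 1" and s: "s \<ge> 0"
  shows "laplace_stieltjes (mix e F G) s = (1 - e) * laplace_stieltjes F s + e * laplace_stieltjes G s"
proof -
  have sets: "sets G = sets F" "sets F = sets borel" "sets G = sets borel"
    and fin: "finite_measure F" "finite_measure G"
    and nonneg: "AE x in F. 0 \<le> x" "AE x in G. 0 \<le> x"
    using F G unfolding nonneg_distr_def prob_space_def by auto
  show ?thesis unfolding laplace_stieltjes_def
    by (rule integral_mix[OF sets(1,2) _ _ _ integrable_exp_neg[OF sets(2) fin(1) nonneg(1) s]
          integrable_exp_neg[OF sets(3) fin(2) nonneg(2) s] e]) simp_all
qed

lemma pollaczek_khinchine_denominator_pos: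
  assumes F: "nonneg_distr F" "integrable F (\<lambda>x. x)"
    and lam: "lam \<ge> 0" "lam * mean F < 1" and s: "s > 0"
  shows "s - lam * (1 - laplace_stieltjes F s) > 0"
proof -
  have sets_F: "sets F = sets borel" and prob: "prob_space F" and nonneg: "AE x in F. 0 \<le> x"
    using F(1) unfolding nonneg_distr_def by auto
  have fin: "finite_measure F" using prob by (simp add: prob_space_def)
  have int_linear: "integrable F (\<lambda>x. 1 - s * x)"
    using F(2) finite_measure.integrable_const[OF fin]
    by (intro Bochner_Integration.integrable_diff integrable_mult_right) auto
  have "(\<integral>x. 1 - s * x \<partial>F) \<le> laplace_stieltjes F s"
    unfolding laplace_stieltjes_def using int_linear integrable_exp_neg[OF sets_F fin nonneg] s
    by (intro integral_mono_AE) (auto intro: exp_ge_add_one_self[of "- s * _", simplified])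
  moreover have "(\<integral>x. 1 - s * x \<partial>F) = (\<integral>x. 1 \<partial>F) - (\<integral>x. s * x \<partial>F)"
    using F(2) finite_measure.integrable_const[OF fin]
    by (intro Bochner_Integration.integral_diff integrable_mult_right) auto
  then have "(\<integral>x. 1 - s * x \<partial>F) = 1 - s * mean F"
    using prob by (simp add: mean_def prob_space.prob_space)
  ultimately have "lam * (1 - laplace_stieltjes F s) \<le> lam * (s * mean F)"
    using lam(1) by (intro mult_left_mono) auto
  moreover have "lam * (s * mean F) < s" using lam(2) s by (simp add: algebra_simps)
  ultimately show ?thesis by simp
qed

lemma has_real_derivative_pollaczek_khinchine_mix:
  fixes lam mp mh gp gh s :: real
  assumes A: "1 - lam * mp \<noteq> 0" and D: "s - lam * (1 - gp) \<noteq> 0" and s: "s \<noteq> 0"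
  defines "v \<equiv> (1 - lam * mp) * s / (s - lam * (1 - gp))"
  shows "((\<lambda>e. (1 - lam * ((1 - e) * mp + e * mh)) * s / (s - lam * (1 - ((1 - e) * gp + e * gh))))
          has_real_derivative - lam / (1 - lam * mp) * v * (mh - mp + v * (gh - gp) / s)) (at 0)"
proof -
  define A where "A = 1 - lam * mp"
  define Dn where "Dn = s - lam * (1 - gp)"
  have "((\<lambda>e. (1 - lam * ((1 - e) * mp + e * mh)) * s) has_real_derivative - (lam * (mh - mp) * s)) (at 0)"
    by (auto intro!: derivative_eq_intros simp: algebra_simps)
  moreover have "((\<lambda>e. s - lam * (1 - ((1 - e) * gp + e * gh))) has_real_derivative lam * (gh - gp)) (at 0)"
    by (auto intro!: derivative_eq_intros simp: algebra_simps)
  ultimately have "((\<lambda>e. (1 - lam * ((1 - e) * mp + e * mh)) * s / (s - lam * (1 - ((1 - e) * gp + e * gh))))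
      has_real_derivative (- (lam * (mh - mp) * s) * Dn - A * s * (lam * (gh - gp))) / (Dn * Dn)) (at 0)"
    using DERIV_divide D unfolding A_def Dn_def by fastforce
  moreover have "(- (lam * (mh - mp) * s) * Dn - A * s * (lam * (gh - gp))) / (Dn * Dn)
      = - lam / A * (A * s / Dn) * (mh - mp + (A * s / Dn) * (gh - gp) / s)"
    using A D s unfolding A_def[symmetric] Dn_def[symmetric] by (simp add: field_simps)
  ultimately show ?thesis unfolding v_def A_def Dn_def by simp
qed

lemma workload_laplace_has_derivative:
  assumes lam: "lam > 0"
    and Fp: "nonneg_distr Fp" "integrable Fp (\<lambda>x. x)" and Fh: "nonneg_distr Fh" "integrable Fh (\<lambda>x. x)"
    and stable: "lam * mean Fp < 1"
    and W: "\<forall>\<epsilon>\<in>{0..<1}. lam * mean (mix \<epsilon> Fp Fh) < 1 \<longrightarrow> mg1_workload lam (mix \<epsilon> Fp Fh) (W \<epsilon>)"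
    and s: "s > 0"
  defines "v \<equiv> laplace_stieltjes (W 0) s"
  shows "((\<lambda>\<epsilon>. laplace_stieltjes (W \<epsilon>) s) has_real_derivative
           - lam / (1 - lam * mean Fp) * v
             * (mean Fh - mean Fp + v * (laplace_stieltjes Fh s - laplace_stieltjes Fp s) / s))
         (at 0 within {0..<1})"
proof -
  define PK where "PK = (\<lambda>\<epsilon>. (1 - lam * ((1 - \<epsilon>) * mean Fp + \<epsilon> * mean Fh)) * s
     / (s - lam * (1 - ((1 - \<epsilon>) * laplace_stieltjes Fp s + \<epsilon> * laplace_stieltjes Fh s))))"
  have PK_eq: "laplace_stieltjes (W \<epsilon>) s = PK \<epsilon>"
    if "\<epsilon> \<in> {0..<1}" "lam * ((1 - \<epsilon>) * mean Fp + \<epsilon> * mean Fh) < 1" for \<epsilon>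
    using that W s mean_mix[OF Fp Fh] laplace_stieltjes_mix[OF Fp(1) Fh(1)]
    by (simp add: mg1_workload_def PK_def laplace_stieltjes_def)
  \<comment> \<open>Stability persists for small \<open>\<epsilon>\<close>, so near 0 the transform is given by the Pollaczek-Khinchine formula.\<close>
  have "((\<lambda>\<epsilon>. lam * ((1 - \<epsilon>) * mean Fp + \<epsilon> * mean Fh)) \<longlongrightarrow> lam * mean Fp) (at 0 within {0..<1})"
    by (auto intro!: tendsto_eq_intros)
  then have "eventually (\<lambda>\<epsilon>. lam * ((1 - \<epsilon>) * mean Fp + \<epsilon> * mean Fh) < 1) (at 0 within {0..<1})"
    using stable by (rule order_tendstoD)
  then have ev: "eventually (\<lambda>\<epsilon>. laplace_stieltjes (W \<epsilon>) s = PK \<epsilon>) (at 0 within {0..<1})"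
    by (auto simp: eventually_at_filter elim!: eventually_mono intro: PK_eq)
  have v: "v = PK 0" unfolding v_def using PK_eq[of 0] stable by simp
  then have v_pk: "v = (1 - lam * mean Fp) * s / (s - lam * (1 - laplace_stieltjes Fp s))"
    by (simp add: PK_def)
  have "(PK has_real_derivative
           - lam / (1 - lam * mean Fp) * v
             * (mean Fh - mean Fp + v * (laplace_stieltjes Fh s - laplace_stieltjes Fp s) / s)) (at 0)"
    unfolding v_pk PK_def using stable s
      pollaczek_khinchine_denominator_pos[OF Fp less_imp_le[OF lam] stable s]
    by (intro has_real_derivative_pollaczek_khinchine_mix) auto
  then show ?thesis
  proof (subst has_field_derivative_cong_eventually[OF ev])
    show "laplace_stieltjes (W 0) s = PK 0" using v by (simp add: v_def)
  qed (rule has_field_derivative_at_within)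
qed

lemma workload_laplace_derivative_eq:
  assumes lam: "lam > 0"
    and Fp: "nonneg_distr Fp" "integrable Fp (\<lambda>x. x)" and Fh: "nonneg_distr Fh" "integrable Fh (\<lambda>x. x)"
    and stable: "lam * mean Fp < 1"
    and W: "\<forall>\<epsilon>\<in>{0..<1}. lam * mean (mix \<epsilon> Fp Fh) < 1 \<longrightarrow> mg1_workload lam (mix \<epsilon> Fp Fh) (W \<epsilon>)"
    and s: "s > 0"
    and D: "((\<lambda>\<epsilon>. laplace_stieltjes (W \<epsilon>) s) has_real_derivative D) (at 0 within {0..<1})"
  shows "D = - lam / (1 - lam * mean Fp) * laplace_stieltjes (W 0) s * (mean Fh - mean Fp
             + laplace_stieltjes (W 0) s * (laplace_stieltjes Fh s - laplace_stieltjes Fp s) / s)"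
proof (rule has_field_derivative_unique[OF D workload_laplace_has_derivative[OF assms(1-8)]])
  have "at (0::real) within {0..<1} = at 0 within {0..}"
    by (rule at_within_nhd[of 0 "{..<1}"]) auto
  then show "at (0::real) within {0..<1} \<noteq> bot" by (simp add: at_within_Ici_at_right)
qed

text \<open>The first-order correction term \<open>c\<close> of the paper, for the workload law \<open>V\<close> of the
  phase-type queue; \<open>(V \<star> V) \<star> excess F\<close> is the law of \<open>V + V' + B\<^sup>e\<close>.\<close>
definition workload_correction :: "real \<Rightarrow> real measure \<Rightarrow> real measure \<Rightarrow> real measure \<Rightarrow> real \<Rightarrow> real"
  where "workload_correction lam Fp Fh V t =
    lam / (1 - lam * mean Fp) *
      ((mean Fp - mean Fh) * measure V {t<..}
       + mean Fh * measure ((V \<star> V) \<star> excess Fh) {t<..}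
       - mean Fp * measure ((V \<star> V) \<star> excess Fp) {t<..})"

lemma has_integral_survival_laplace_distr:
  assumes M: "nonneg_distr M" and s: "s > 0"
  shows "((\<lambda>t. exp (- s * t) * measure M {t<..}) has_integral (1 - laplace_stieltjes M s) / s) {0..}"
  using has_integral_survival_laplace[of M s] M s
  by (simp add: nonneg_distr_def prob_space_def prob_space.prob_space)

lemma laplace_stieltjes_workload_excess:
  assumes V: "nonneg_distr V" and F: "nonneg_distr F" "integrable F (\<lambda>x. x)" and mean_pos: "mean F > 0"
  shows "nonneg_distr ((V \<star> V) \<star> excess F)"
    and "s > 0 \<Longrightarrow> laplace_stieltjes ((V \<star> V) \<star> excess F) s
           = laplace_stieltjes V s ^ 2 * ((1 - laplace_stieltjes F s) / (s * mean F))"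
proof -
  have VV: "nonneg_distr (V \<star> V)" and E: "nonneg_distr (excess F)"
    using nonneg_distr_convolution[OF V V] nonneg_distr_excess[OF F mean_pos] .
  show "nonneg_distr ((V \<star> V) \<star> excess F)" by (rule nonneg_distr_convolution[OF VV E])
  have conv: "laplace_stieltjes (M \<star> N) s = laplace_stieltjes M s * laplace_stieltjes N s"
    if "nonneg_distr M" "nonneg_distr N" for M N
    using that by (intro laplace_stieltjes_convolution) (auto simp: nonneg_distr_def prob_space_def)
  assume "s > 0"
  then show "laplace_stieltjes ((V \<star> V) \<star> excess F) s
           = laplace_stieltjes V s ^ 2 * ((1 - laplace_stieltjes F s) / (s * mean F))"
    using conv[OF VV E] conv[OF V V] laplace_stieltjes_excess[OF F(1) mean_pos] by (simp add: power2_eq_square)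
qed

lemma has_integral_laplace_workload_correction:
  assumes V: "nonneg_distr V"
    and Fp: "nonneg_distr Fp" "integrable Fp (\<lambda>x. x)" "mean Fp > 0"
    and Fh: "nonneg_distr Fh" "integrable Fh (\<lambda>x. x)" "mean Fh > 0"
    and s: "s > 0"
  defines "v \<equiv> laplace_stieltjes V s"
  shows "((\<lambda>t. exp (- s * t) * workload_correction lam Fp Fh V t) has_integral
           lam / (1 - lam * mean Fp) * v
             * (mean Fh - mean Fp + v * (laplace_stieltjes Fh s - laplace_stieltjes Fp s) / s) / s) {0..}"
proof -
  note Xp = laplace_stieltjes_workload_excess[OF V Fp]
  note Xh = laplace_stieltjes_workload_excess[OF V Fh]
  have combination: "((\<lambda>t. lam / (1 - lam * mean Fp) *
            ((mean Fp - mean Fh) * (exp (- s * t) * measure V {t<..})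
             + mean Fh * (exp (- s * t) * measure ((V \<star> V) \<star> excess Fh) {t<..})
             - mean Fp * (exp (- s * t) * measure ((V \<star> V) \<star> excess Fp) {t<..}))) has_integral
         lam / (1 - lam * mean Fp) *
            ((mean Fp - mean Fh) * ((1 - v) / s)
             + mean Fh * ((1 - v ^ 2 * ((1 - laplace_stieltjes Fh s) / (s * mean Fh))) / s)
             - mean Fp * ((1 - v ^ 2 * ((1 - laplace_stieltjes Fp s) / (s * mean Fp))) / s))) {0..}"
    unfolding v_def
    by (intro has_integral_mult_right has_integral_add has_integral_diff)
      (simp_all only: Xp(2)[OF s, symmetric] Xh(2)[OF s, symmetric]
        has_integral_survival_laplace_distr V Xp(1) Xh(1) s)
  have laplace_value: "(mean Fp - mean Fh) * ((1 - v) / s)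
             + mean Fh * ((1 - v ^ 2 * ((1 - laplace_stieltjes Fh s) / (s * mean Fh))) / s)
             - mean Fp * ((1 - v ^ 2 * ((1 - laplace_stieltjes Fp s) / (s * mean Fp))) / s)
      = v * (mean Fh - mean Fp + v * (laplace_stieltjes Fh s - laplace_stieltjes Fp s) / s) / s"
    using s Fp(3) Fh(3) by (simp add: field_simps power2_eq_square)
  have integrand: "(\<lambda>t. exp (- s * t) * workload_correction lam Fp Fh V t) = (\<lambda>t. lam / (1 - lam * mean Fp) *
            ((mean Fp - mean Fh) * (exp (- s * t) * measure V {t<..})
             + mean Fh * (exp (- s * t) * measure ((V \<star> V) \<star> excess Fh) {t<..})
             - mean Fp * (exp (- s * t) * measure ((V \<star> V) \<star> excess Fp) {t<..})))"
    by (simp add: workload_correction_def fun_eq_iff algebra_simps)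
  show ?thesis
    using combination unfolding integrand laplace_value by (simp only: mult.assoc times_divide_eq_right)
qed

lemma continuous_at_right_workload_correction:
  assumes V: "nonneg_distr V"
    and Fp: "nonneg_distr Fp" "integrable Fp (\<lambda>x. x)" "mean Fp > 0"
    and Fh: "nonneg_distr Fh" "integrable Fh (\<lambda>x. x)" "mean Fh > 0"
  shows "continuous (at_right t) (workload_correction lam Fp Fh V)"
proof -
  have survival: "continuous (at_right t) (\<lambda>t. measure M {t<..})" if "nonneg_distr M" for M
    using that by (intro continuous_at_right_survival) (auto simp: nonneg_distr_def prob_space_def)
  show ?thesis unfolding workload_correction_def
    using laplace_stieltjes_workload_excess(1)[OF V Fp] laplace_stieltjes_workload_excess(1)[OF V Fh]
    by (intro continuous_intros survival V)
qed

theorem corollary1: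
  fixes lam :: real and Fp Fh :: "real measure"
    and W :: "real \<Rightarrow> real measure" and c :: "real \<Rightarrow> real"
  assumes lam_pos: "lam > 0"
    and Fp: "nonneg_distr Fp" "integrable Fp (\<lambda>x. x)" "phase_type Fp"
    and Fh: "nonneg_distr Fh" "integrable Fh (\<lambda>x. x)" "heavy_tailed Fh"
    and stable: "lam * mean Fp < 1"
    and W: "\<forall>\<epsilon>\<in>{0..<1}. lam * mean (mix \<epsilon> Fp Fh) < 1 \<longrightarrow>
              mg1_workload lam (mix \<epsilon> Fp Fh) (W \<epsilon>)"
    and c_laplace: "\<forall>s>0. \<exists>D.
              ((\<lambda>\<epsilon>. \<integral>x. exp (- s * x) \<partial>(W \<epsilon>)) has_real_derivative D) (at 0 within {0..<1}) \<and>
              ((\<lambda>t. exp (- s * t) * c t) has_integral (- (1 / s) * D)) {0..}"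
    and c_rcont: "\<forall>t\<ge>0. continuous (at_right t) c"
  shows "\<forall>t\<ge>0. c t =
           lam / (1 - lam * mean Fp) *
             ((mean Fp - mean Fh) * measure (W 0) {t<..}
              + mean Fh * measure ((W 0 \<star> W 0) \<star> excess Fh) {t<..}
              - mean Fp * measure ((W 0 \<star> W 0) \<star> excess Fp) {t<..})"
proof -
  have Fp': "nonneg_distr Fp" "integrable Fp (\<lambda>x. x)" "mean Fp > 0"
    using Fp mean_pos_if_phase_type by auto
  have Fh': "nonneg_distr Fh" "integrable Fh (\<lambda>x. x)" "mean Fh > 0"
    using Fh mean_pos_if_heavy_tailed by auto
  have "mix 0 Fp Fh = Fp" using Fp(1) Fh(1) by (intro mix_0) (simp add: nonneg_distr_def)
  then have "mg1_workload lam Fp (W 0)" using W stable by (metis atLeastLessThan_iff zero_less_one order_refl)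
  then have V: "nonneg_distr (W 0)" by (simp add: mg1_workload_def)
  have "c t - workload_correction lam Fp Fh (W 0) t = 0" if "t \<ge> 0" for t
  proof (rule laplace_transform_unique[OF _ _ that])
    fix s :: real assume s: "s > 0"
    obtain D where D: "((\<lambda>\<epsilon>. laplace_stieltjes (W \<epsilon>) s) has_real_derivative D) (at 0 within {0..<1})"
      and c_int: "((\<lambda>t. exp (- s * t) * c t) has_integral (- (1 / s) * D)) {0..}"
      using c_laplace s unfolding laplace_stieltjes_def by blast
    have "- (1 / s) * D = lam / (1 - lam * mean Fp) * laplace_stieltjes (W 0) s * (mean Fh - mean Fp
        + laplace_stieltjes (W 0) s * (laplace_stieltjes Fh s - laplace_stieltjes Fp s) / s) / s"
      using workload_laplace_derivative_eq[OF lam_pos Fp(1,2) Fh(1,2) stable W s D] by simp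
    with has_integral_diff[OF c_int has_integral_laplace_workload_correction[OF V Fp' Fh' s, where lam = lam]]
    show "((\<lambda>t. exp (- s * t) * (c t - workload_correction lam Fp Fh (W 0) t)) has_integral 0) {0..}"
      by (simp add: right_diff_distrib)
  next
    fix t :: real assume "t \<ge> 0"
    then show "continuous (at_right t) (\<lambda>t. c t - workload_correction lam Fp Fh (W 0) t)"
      using c_rcont continuous_at_right_workload_correction[OF V Fp' Fh'] by (intro continuous_intros) auto
  qed
  then show ?thesis unfolding workload_correction_def by simp
qed

end
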